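(* Let $\sigma=(a_1,\ldots,a_s)$ be a partition of the positive integer $r\ge 2$ with $a_1\ge a_2\ge\cdots\ge a_s\ge 1$, let $n\ge s$ and $q\ge a_1$, and let $H=H(n,r,q\mid\sigma)$. Then the independence number of $H$ is \[\alpha(H)=\max\{(j-1)q+(a_j-1)(n-j+1)\;:\; j=1,\ldots,s\}.\]
   Context: A $\sigma$-hypergraph $H=H(n,r,q\mid\sigma)$, for a partition $\sigma=(a_1,\ldots,a_s)$ of $r$ with $s$ parts, is the $r$-uniform hypergraph whose vertex set is the disjoint union of $n$ classes $V_1,\ldots,V_n$, each of size $q$; an $r$-subset $K$ of vertices is an edge iff the multiset of non-zero values $|K\cap V_i|$ ($1\le i\le n$) equals $\sigma$. A vertex set is independent if it contains no edge; $\alpha(H)$ is the maximum size of an independent set. *)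

theory Defs
  imports Main "HOL-Library.Multiset"
begin

definition sh_vertices :: "nat \<Rightarrow> nat \<Rightarrow> (nat \<times> nat) set" where
  "sh_vertices n q = {0..<n} \<times> {0..<q}"

definition sh_class :: "nat \<Rightarrow> nat \<Rightarrow> (nat \<times> nat) set" where
  "sh_class q i = {i} \<times> {0..<q}"

definition sh_profile :: "nat \<Rightarrow> nat \<Rightarrow> (nat \<times> nat) set \<Rightarrow> nat multiset" where
  "sh_profile n q K = filter_mset (\<lambda>k. k \<noteq> 0) (image_mset (\<lambda>i. card (K \<inter> sh_class q i)) (mset [0..<n]))"

definition sh_edge :: "nat \<Rightarrow> nat \<Rightarrow> nat \<Rightarrow> nat list \<Rightarrow> (nat \<times> nat) set \<Rightarrow> bool" where
  "sh_edge n r q \<sigma> K \<longleftrightarrow> K \<subseteq> sh_vertices n q \<and> card K = r \<and> sh_profile n q K = mset \<sigma>"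

definition sh_independent :: "nat \<Rightarrow> nat \<Rightarrow> nat \<Rightarrow> nat list \<Rightarrow> (nat \<times> nat) set \<Rightarrow> bool" where
  "sh_independent n r q \<sigma> I \<longleftrightarrow> I \<subseteq> sh_vertices n q \<and> (\<forall>K. sh_edge n r q \<sigma> K \<longrightarrow> \<not> K \<subseteq> I)"

definition sh_alpha :: "nat \<Rightarrow> nat \<Rightarrow> nat \<Rightarrow> nat list \<Rightarrow> nat" where
  "sh_alpha n r q \<sigma> = Max (card ` {I. sh_independent n r q \<sigma> I})"

end

theory Submission
  imports Defs
begin

text \<open>Call a class heavy for a threshold a if it meets the vertex set in at least a vertices.
  A set I contains an edge as soon as the parts a_1 \<ge> \<dots> \<ge> a_s can be placed in distinct
  classes, the k-th in a class heavy for a_k; choosing greedily, this succeeds whenever for every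
  k at least k classes are heavy for a_k. So if I is independent, some k has at most k - 1
  classes heavy for a_k: these hold at most q vertices each and the others at most a_k - 1, which
  bounds |I| by (k - 1) q + (a_k - 1)(n - k + 1). Conversely, k - 1 full classes together with
  a_k - 1 vertices of every other class form an independent set of exactly that size, because an
  edge has at least k parts of size \<ge> a_k and hence needs k classes heavy for a_k.\<close>

lemma card_sh_class [simp]: "card (sh_class q i) = q"
  and finite_sh_class [simp]: "finite (sh_class q i)"
  unfolding sh_class_def by simp_all

lemma sh_class_disjoint: "i \<noteq> j \<Longrightarrow> sh_class q i \<inter> sh_class q j = {}"
  unfolding sh_class_def by auto

lemma sh_class_unique: "x \<in> sh_class q i \<Longrightarrow> x \<in> sh_class q j \<Longrightarrow> i = j"
  unfolding sh_class_def by auto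

lemma finite_sh_vertices [simp]: "finite (sh_vertices n q)"
  unfolding sh_vertices_def by simp

lemma card_Int_sh_class_le: "card (K \<inter> sh_class q i) \<le> q"
  by (metis card_sh_class card_mono finite_sh_class inf_le2)

lemma card_eq_sum_sh_class:
  assumes "K \<subseteq> sh_vertices n q"
  shows "card K = (\<Sum>i<n. card (K \<inter> sh_class q i))"
proof -
  have "K = (\<Union>i<n. K \<inter> sh_class q i)"
    using assms unfolding sh_vertices_def sh_class_def by auto
  also have "card \<dots> = (\<Sum>i<n. card (K \<inter> sh_class q i))"
    by (rule card_UN_disjoint) (use sh_class_disjoint in auto)
  finally show ?thesis .
qed

definition heavy_classes :: "nat \<Rightarrow> nat \<Rightarrow> nat \<Rightarrow> (nat \<times> nat) set \<Rightarrow> nat set" where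
  "heavy_classes n q a K = {i. i < n \<and> a \<le> card (K \<inter> sh_class q i)}"

lemma sum_le_threshold_split:
  fixes b :: "'a \<Rightarrow> nat"
  assumes "finite A" and "\<And>i. i \<in> A \<Longrightarrow> b i \<le> q"
  shows "sum b A \<le> card {i\<in>A. a \<le> b i} * q + card {i\<in>A. b i < a} * (a - 1)"
proof -
  have "sum b A = sum b {i\<in>A. a \<le> b i} + sum b {i\<in>A. b i < a}"
    using assms(1) by (subst sum.union_disjoint[symmetric]) (auto intro: sum.cong)
  also have "sum b {i\<in>A. a \<le> b i} \<le> card {i\<in>A. a \<le> b i} * q"
    using sum_bounded_above[of "{i\<in>A. a \<le> b i}" b q] assms(2) by simp
  also have "sum b {i\<in>A. b i < a} \<le> card {i\<in>A. b i < a} * (a - 1)"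
  proof -
    have "b i \<le> a - 1" if "i \<in> {i\<in>A. b i < a}" for i
      using that by auto
    then show ?thesis
      using sum_bounded_above[of "{i\<in>A. b i < a}" b "a - 1"] by simp
  qed
  finally show ?thesis by simp
qed

lemma card_heavy_classes_gt:
  assumes "K \<subseteq> sh_vertices n q" and "k \<le> n" and "a \<le> Suc q"
    and "k * q + (a - 1) * (n - k) < card K"
  shows "k < card (heavy_classes n q a K)"
proof (rule ccontr)
  define h where "h = card (heavy_classes n q a K)"
  assume "\<not> k < h"
  then obtain d where d: "k = h + d" using le_Suc_ex not_less by blast
  have light: "card {i\<in>{..<n}. card (K \<inter> sh_class q i) < a} = n - h"
  proof -
    have "{i\<in>{..<n}. card (K \<inter> sh_class q i) < a} = {..<n} - heavy_classes n q a K"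
      unfolding heavy_classes_def by auto
    then show ?thesis
      unfolding h_def by (simp add: card_Diff_subset heavy_classes_def subset_eq)
  qed
  have "card K \<le> h * q + (n - h) * (a - 1)"
    using sum_le_threshold_split[of "{..<n}" "\<lambda>i. card (K \<inter> sh_class q i)" q a]
    unfolding card_eq_sum_sh_class[OF assms(1)] light h_def
    by (simp add: card_Int_sh_class_le heavy_classes_def)
  also have "\<dots> = h * q + d * (a - 1) + (n - k) * (a - 1)"
  proof -
    have "n - h = d + (n - k)"
      using d assms(2) by simp
    then show ?thesis
      by (simp add: add_mult_distrib)
  qed
  also have "\<dots> \<le> h * q + d * q + (n - k) * (a - 1)"
    using assms(3) by (simp add: mult_le_mono2 le_diff_conv)
  also have "\<dots> = k * q + (n - k) * (a - 1)"
    using d by (simp add: add_mult_distrib)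
  finally show False
    using assms(4) by (metis mult.commute not_le)
qed

lemma inj_choice_from_large_sets:
  assumes "\<And>k. k < s \<Longrightarrow> k < card (A k)"
  shows "\<exists>c. inj_on c {..<s} \<and> (\<forall>k<s. c k \<in> A k)"
  using assms
proof (induction s)
  case 0
  then show ?case by simp
next
  case (Suc s)
  then obtain c where c: "inj_on c {..<s}" "\<forall>k<s. c k \<in> A k"
    by auto
  have "\<not> A s \<subseteq> c ` {..<s}"
    using Suc.prems[of s] card_mono[of "c ` {..<s}" "A s"] card_image_le[of "{..<s}" c]
    by auto
  then obtain i where "i \<in> A s" "i \<notin> c ` {..<s}"
    by blast
  with c have "inj_on (c(s := i)) {..<Suc s} \<and> (\<forall>k<Suc s. (c(s := i)) k \<in> A k)"
    by (auto simp: lessThan_Suc less_Suc_eq inj_on_def)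
  then show ?case
    by blast
qed

lemma sh_profile_eq:
  "sh_profile n q K =
     image_mset (\<lambda>i. card (K \<inter> sh_class q i)) (mset_set {i. i < n \<and> K \<inter> sh_class q i \<noteq> {}})"
proof -
  have "{i. i < n \<and> K \<inter> sh_class q i \<noteq> {}} = {i \<in> {..<n}. card (K \<inter> sh_class q i) \<noteq> 0}"
    by (auto simp: finite_subset)
  then show ?thesis
    unfolding sh_profile_def mset_set_upto_eq_mset_upto[symmetric] filter_mset_image_mset
    by simp
qed

lemma card_heavy_classes_sh_edge:
  assumes "sh_edge n r q \<sigma> K" and "0 < a"
  shows "card (heavy_classes n q a K) = length (filter (\<lambda>x. a \<le> x) \<sigma>)"
proof -
  define g where "g i = card (K \<inter> sh_class q i)" for i
  have "heavy_classes n q a K = {i \<in> {i. i < n \<and> K \<inter> sh_class q i \<noteq> {}}. a \<le> g i}"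
    using assms(2) unfolding heavy_classes_def g_def by auto
  then have "card (heavy_classes n q a K) = size (filter_mset (\<lambda>x. a \<le> x) (sh_profile n q K))"
    unfolding sh_profile_eq filter_mset_image_mset g_def by simp
  also have "\<dots> = length (filter (\<lambda>x. a \<le> x) \<sigma>)"
    using assms(1) unfolding sh_edge_def by (metis mset_filter size_mset)
  finally show ?thesis .
qed

lemma sh_edge_if_class_cards:
  assumes K: "K \<subseteq> sh_vertices n q"
    and c: "inj_on c {..<length \<sigma>}" "\<And>k. k < length \<sigma> \<Longrightarrow> c k < n"
    and on: "\<And>k. k < length \<sigma> \<Longrightarrow> card (K \<inter> sh_class q (c k)) = \<sigma> ! k"
    and off: "\<And>i. i \<notin> c ` {..<length \<sigma>} \<Longrightarrow> K \<inter> sh_class q i = {}"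
    and pos: "0 \<notin> set \<sigma>"
  shows "sh_edge n (sum_list \<sigma>) q \<sigma> K"
proof -
  define g where "g i = card (K \<inter> sh_class q i)" for i
  have g_c: "g (c k) = \<sigma> ! k" if "k < length \<sigma>" for k
    using on that unfolding g_def by simp
  have support: "{i. i < n \<and> K \<inter> sh_class q i \<noteq> {}} = c ` {..<length \<sigma>}"
  proof -
    have "K \<inter> sh_class q (c k) \<noteq> {}" if "k < length \<sigma>" for k
      using on[OF that] pos that by (metis card.empty nth_mem)
    then show ?thesis
      using off c(2) by blast
  qed
  have "sh_profile n q K = image_mset (\<lambda>k. g (c k)) (mset_set {..<length \<sigma>})"
    unfolding sh_profile_eq support image_mset_mset_set[OF c(1), symmetric]
    by (simp add: g_def multiset.map_comp comp_def)
  also have "\<dots> = image_mset ((!) \<sigma>) (mset_set {..<length \<sigma>})"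
    by (rule image_mset_cong) (simp add: g_c)
  also have "\<dots> = mset \<sigma>"
    by (metis mset_set_upto_eq_mset_upto mset_map map_nth)
  finally have profile: "sh_profile n q K = mset \<sigma>" .
  have "card K = (\<Sum>i<n. g i)"
    unfolding g_def by (rule card_eq_sum_sh_class[OF K])
  also have "\<dots> = (\<Sum>i\<in>c ` {..<length \<sigma>}. g i)"
    using c(2) off unfolding g_def by (intro sum.mono_neutral_right) auto
  also have "\<dots> = (\<Sum>k<length \<sigma>. \<sigma> ! k)"
    by (simp add: sum.reindex[OF c(1)] g_c)
  also have "\<dots> = sum_list \<sigma>"
    by (simp add: sum_list_sum_nth atLeast0LessThan)
  finally show ?thesis
    using K profile unfolding sh_edge_def by blast
qed

lemma sh_edge_within_heavy_classes:
  assumes I: "I \<subseteq> sh_vertices n q" and c: "inj_on c {..<length \<sigma>}"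
    and heavy: "\<And>k. k < length \<sigma> \<Longrightarrow> c k \<in> heavy_classes n q (\<sigma> ! k) I"
    and pos: "0 \<notin> set \<sigma>"
  shows "\<exists>K \<subseteq> I. sh_edge n (sum_list \<sigma>) q \<sigma> K"
proof -
  have "\<exists>T. T \<subseteq> I \<inter> sh_class q (c k) \<and> card T = \<sigma> ! k" if "k < length \<sigma>" for k
    using heavy[OF that] obtain_subset_with_card_n[of "\<sigma> ! k" "I \<inter> sh_class q (c k)"]
    unfolding heavy_classes_def by blast
  then obtain S where S: "\<And>k. k < length \<sigma> \<Longrightarrow> S k \<subseteq> I \<inter> sh_class q (c k) \<and> card (S k) = \<sigma> ! k"
    by metis
  define K where "K = (\<Union>k<length \<sigma>. S k)"
  have K_class: "K \<inter> sh_class q i = (\<Union>k\<in>{k. k < length \<sigma> \<and> c k = i}. S k)" for i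
  proof -
    have in_class: "x \<in> sh_class q (c k)" if "k < length \<sigma>" "x \<in> S k" for k x
      using S that by blast
    show ?thesis
      unfolding K_def by (auto dest: in_class sh_class_unique)
  qed
  have "{k. k < length \<sigma> \<and> c k = c l} = {l}" if "l < length \<sigma>" for l
    using c that by (auto simp: inj_on_def)
  then have on: "card (K \<inter> sh_class q (c k)) = \<sigma> ! k" if "k < length \<sigma>" for k
    using S that by (simp add: K_class)
  have off: "K \<inter> sh_class q i = {}" if "i \<notin> c ` {..<length \<sigma>}" for i
    using that by (auto simp: K_class)
  have "K \<subseteq> I"
    using S unfolding K_def by blast
  have "c k < n" if "k < length \<sigma>" for k
    using heavy[OF that] unfolding heavy_classes_def by simp
  then have "sh_edge n (sum_list \<sigma>) q \<sigma> K"
    using sh_edge_if_class_cards[OF _ c _ on off pos] \<open>K \<subseteq> I\<close> I by blast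
  with \<open>K \<subseteq> I\<close> show ?thesis
    by blast
qed

lemma sorted_desc_length_filter_ge_nth:
  fixes xs :: "'a::linorder list"
  assumes "sorted_wrt (\<ge>) xs" and "k < length xs"
  shows "k < length (filter (\<lambda>x. xs ! k \<le> x) xs)"
proof -
  have "xs ! k \<le> xs ! i" if "i \<le> k" for i
    using sorted_wrt_nth_less[OF assms(1), of i k] that assms(2) by (cases "i = k") auto
  then have "{..k} \<subseteq> {i. i < length xs \<and> xs ! k \<le> xs ! i}"
    using assms(2) by auto
  then have "card {..k} \<le> card {i. i < length xs \<and> xs ! k \<le> xs ! i}"
    by (rule card_mono[rotated]) simp
  then show ?thesis
    by (simp add: length_filter_conv_card)
qed

definition block_set :: "nat \<Rightarrow> nat \<Rightarrow> nat \<Rightarrow> nat \<Rightarrow> (nat \<times> nat) set" where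
  "block_set n q m b = {..<m} \<times> {..<q} \<union> {m..<n} \<times> {..<b}"

lemma card_block_set: "card (block_set n q m b) = m * q + b * (n - m)"
  unfolding block_set_def by (subst card_Un_disjoint) auto

lemma block_set_subset_sh_vertices:
  "m \<le> n \<Longrightarrow> b \<le> q \<Longrightarrow> block_set n q m b \<subseteq> sh_vertices n q"
  unfolding block_set_def sh_vertices_def by auto

lemma heavy_classes_block_set:
  assumes "K \<subseteq> block_set n q m b"
  shows "heavy_classes n q (Suc b) K \<subseteq> {..<m}"
proof
  fix i
  assume heavy: "i \<in> heavy_classes n q (Suc b) K"
  show "i \<in> {..<m}"
  proof (rule ccontr)
    assume "i \<notin> {..<m}"
    with assms have "K \<inter> sh_class q i \<subseteq> {i} \<times> {..<b}"
      unfolding block_set_def sh_class_def by auto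
    then have "card (K \<inter> sh_class q i) \<le> b"
      using card_mono[of "{i} \<times> {..<b}"] by fastforce
    with heavy show False
      unfolding heavy_classes_def by simp
  qed
qed

lemma sh_independent_block_set:
  assumes "sorted_wrt (\<ge>) \<sigma>" and "0 \<notin> set \<sigma>" and "k < length \<sigma>"
    and "length \<sigma> \<le> n" and "\<sigma> ! k \<le> q"
  shows "sh_independent n r q \<sigma> (block_set n q k (\<sigma> ! k - 1))"
  unfolding sh_independent_def
proof (intro conjI allI impI notI)
  show "block_set n q k (\<sigma> ! k - 1) \<subseteq> sh_vertices n q"
    using assms by (intro block_set_subset_sh_vertices) auto
  fix K
  assume edge: "sh_edge n r q \<sigma> K" and "K \<subseteq> block_set n q k (\<sigma> ! k - 1)"
  have Suc_pred: "Suc (\<sigma> ! k - 1) = \<sigma> ! k"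
    using assms(2,3) by (metis Suc_pred' bot_nat_0.not_eq_extremum nth_mem)
  have "heavy_classes n q (\<sigma> ! k) K \<subseteq> {..<k}"
    using heavy_classes_block_set[OF \<open>K \<subseteq> _\<close>] unfolding Suc_pred .
  then have "card (heavy_classes n q (\<sigma> ! k) K) \<le> k"
    using card_mono[of "{..<k}"] by fastforce
  moreover have "k < card (heavy_classes n q (\<sigma> ! k) K)"
    using card_heavy_classes_sh_edge[OF edge] sorted_desc_length_filter_ge_nth[OF assms(1,3)] Suc_pred
    by simp
  ultimately show False
    by simp
qed

lemma sh_independent_card_le:
  assumes indep: "sh_independent n (sum_list \<sigma>) q \<sigma> I"
    and "length \<sigma> \<le> n" and "\<forall>x\<in>set \<sigma>. x \<le> q" and "0 \<notin> set \<sigma>"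
  shows "\<exists>k<length \<sigma>. card I \<le> k * q + (\<sigma> ! k - 1) * (n - k)"
proof (rule ccontr)
  assume large: "\<not> ?thesis"
  have I: "I \<subseteq> sh_vertices n q"
    using indep unfolding sh_independent_def by simp
  have "k < card (heavy_classes n q (\<sigma> ! k) I)" if "k < length \<sigma>" for k
    using large that assms(2,3) nth_mem[OF that]
    by (intro card_heavy_classes_gt[OF I]) (auto simp: not_le le_SucI)
  from inj_choice_from_large_sets[OF this] obtain c
    where "inj_on c {..<length \<sigma>}" "\<And>k. k < length \<sigma> \<Longrightarrow> c k \<in> heavy_classes n q (\<sigma> ! k) I"
    by blast
  from sh_edge_within_heavy_classes[OF I this assms(4)] obtain K
    where "K \<subseteq> I" "sh_edge n (sum_list \<sigma>) q \<sigma> K"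
    by blast
  with indep show False
    unfolding sh_independent_def by blast
qed

lemma finite_sh_independent: "finite {I. sh_independent n r q \<sigma> I}"
  by (rule finite_subset[of _ "Pow (sh_vertices n q)"]) (auto simp: sh_independent_def)

lemma sh_alpha_eq_Max:
  assumes "sorted_wrt (\<ge>) \<sigma>" and "0 \<notin> set \<sigma>"
    and "length \<sigma> \<le> n" and "\<forall>x\<in>set \<sigma>. x \<le> q"
  shows "sh_alpha n (sum_list \<sigma>) q \<sigma> = Max ((\<lambda>k. k * q + (\<sigma> ! k - 1) * (n - k)) ` {..<length \<sigma>})"
    (is "_ = Max (?f ` _)")
  unfolding sh_alpha_def
proof (rule Max_eq_if)
  show "\<forall>a\<in>card ` {I. sh_independent n (sum_list \<sigma>) q \<sigma> I}. \<exists>b\<in>?f ` {..<length \<sigma>}. a \<le> b"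
    using sh_independent_card_le[OF _ assms(3,4,2)] by fastforce
  have "?f k \<in> card ` {I. sh_independent n (sum_list \<sigma>) q \<sigma> I}" if "k < length \<sigma>" for k
  proof -
    have "sh_independent n (sum_list \<sigma>) q \<sigma> (block_set n q k (\<sigma> ! k - 1))"
      using sh_independent_block_set[OF assms(1,2) that assms(3)] assms(4) that by simp
    then show ?thesis
      unfolding card_block_set[symmetric] by blast
  qed
  then show "\<forall>b\<in>?f ` {..<length \<sigma>}. \<exists>a\<in>card ` {I. sh_independent n (sum_list \<sigma>) q \<sigma> I}. b \<le> a"
    by blast
qed (simp_all add: finite_sh_independent)

theorem corollary2p9:
  fixes \<sigma> :: "nat list" and r n q :: nat
  assumes "r \<ge> 2"
    and "sum_list \<sigma> = r"
    and "sorted_wrt (\<ge>) \<sigma>"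
    and "\<forall>a\<in>set \<sigma>. a \<ge> 1"
    and "n \<ge> length \<sigma>"
    and "q \<ge> \<sigma> ! 0"
  shows "sh_alpha n r q \<sigma> =
    Max ((\<lambda>j. (j - 1) * q + (\<sigma> ! (j - 1) - 1) * (n - j + 1)) ` {1..length \<sigma>})"
proof -
  have "0 \<notin> set \<sigma>"
    using assms(4) by auto
  moreover have "\<forall>x\<in>set \<sigma>. x \<le> q"
    using assms(3,6) by (cases \<sigma>) auto
  moreover have "(\<lambda>j. (j - 1) * q + (\<sigma> ! (j - 1) - 1) * (n - j + 1)) ` {1..length \<sigma>} =
      (\<lambda>k. k * q + (\<sigma> ! k - 1) * (n - k)) ` {..<length \<sigma>}"
    unfolding image_Suc_lessThan[symmetric] image_image
    using assms(5) by (intro image_cong) (simp_all add: Suc_diff_Suc)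
  ultimately show ?thesis
    using sh_alpha_eq_Max[OF assms(3) _ assms(5)] assms(2) by simp
qed

end
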